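(* Let $\Theta=(\theta,w)$ be a twisted partial action of a group $G$ on an inverse semigroup $S$. Then the crossed product $S*_\Theta G$ is an inverse semigroup, and for every $s\delta_x\in S*_\Theta G$, $$(s\delta_x)^{-1}=w_{x^{-1},x}^{-1}\theta_{x^{-1}}(s^{-1})\delta_{x^{-1}}.$$
   Context: A multiplier of a semigroup $T$ is a pair $(L,R)$ of maps $T\to T$ with $L(st)=L(s)t$, $R(st)=sR(t)$, $sL(t)=R(s)t$; write $ws=L(s)$, $sw=R(s)$. Multipliers form a monoid $\mathcal M(T)$ with $(L,R)(L',R')=(L\circ L',R'\circ R)$, with unit group $\mathcal U(\mathcal M(T))$. A twisted partial action of $G$ on a semigroup $S$ is $\Theta=(\theta,w)$, where $\theta_x:D_{x^{-1}}\to D_x$ ($x\in G$) are isomorphisms between nonempty ideals of $S$ and $w_{x,y}\in\mathcal U(\mathcal M(D_xD_{xy}))$, such that (i) $D_x^2=D_x$, $D_xD_y=D_yD_x$; (ii) $D_1=S$, $\theta_1=\mathrm{id}_S$; (iii) $\theta_x(D_{x^{-1}}D_y)=D_xD_{xy}$; (iv) $\theta_x(\theta_y(s))=w_{x,y}\theta_{xy}(s)w_{x,y}^{-1}$ for $s\in D_{y^{-1}}D_{y^{-1}x^{-1}}$; (v) $w_{1,x}=w_{x,1}$ are the identity multiplier of $D_x$; (vi) $\theta_x(sw_{y,z})w_{x,yz}=\theta_x(s)w_{x,y}w_{xy,z}$ for $s\in D_{x^{-1}}D_yD_{yz}$. The crossed product is $S*_\Theta G=\{s\delta_x: x\in G,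 s\in D_x\}$ with $s\delta_x\cdot t\delta_y=\theta_x(\theta_x^{-1}(s)t)w_{x,y}\delta_{xy}$; it is an associative semigroup. *)

theory Defs
  imports "HOL-Algebra.Group"
begin

definition semigroup_on :: "'a set \<Rightarrow> ('a \<Rightarrow> 'a \<Rightarrow> 'a) \<Rightarrow> bool" where
  "semigroup_on S mul \<longleftrightarrow>
     (\<forall>a\<in>S. \<forall>b\<in>S. mul a b \<in> S) \<and>
     (\<forall>a\<in>S. \<forall>b\<in>S. \<forall>c\<in>S. mul (mul a b) c = mul a (mul b c))"

definition inverse_semigroup_on :: "'a set \<Rightarrow> ('a \<Rightarrow> 'a \<Rightarrow> 'a) \<Rightarrow> bool" where
  "inverse_semigroup_on S mul \<longleftrightarrow> semigroup_on S mul \<and>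
     (\<forall>a\<in>S. \<exists>!b. b \<in> S \<and> mul (mul a b) a = a \<and> mul (mul b a) b = b)"

definition sg_inv :: "'a set \<Rightarrow> ('a \<Rightarrow> 'a \<Rightarrow> 'a) \<Rightarrow> 'a \<Rightarrow> 'a" where
  "sg_inv S mul a = (THE b. b \<in> S \<and> mul (mul a b) a = a \<and> mul (mul b a) b = b)"

definition setmul :: "('a \<Rightarrow> 'a \<Rightarrow> 'a) \<Rightarrow> 'a set \<Rightarrow> 'a set \<Rightarrow> 'a set" where
  "setmul mul A B = {mul a b | a b. a \<in> A \<and> b \<in> B}"

definition sg_ideal :: "'a set \<Rightarrow> ('a \<Rightarrow> 'a \<Rightarrow> 'a) \<Rightarrow> 'a set \<Rightarrow> bool" where
  "sg_ideal S mul I \<longleftrightarrow> I \<noteq> {} \<and> I \<subseteq> S \<and>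
     (\<forall>s\<in>S. \<forall>a\<in>I. mul s a \<in> I \<and> mul a s \<in> I)"

definition sg_iso :: "('a \<Rightarrow> 'a \<Rightarrow> 'a) \<Rightarrow> ('a \<Rightarrow> 'a) \<Rightarrow> 'a set \<Rightarrow> 'a set \<Rightarrow> bool" where
  "sg_iso mul f A B \<longleftrightarrow> bij_betw f A B \<and>
     (\<forall>a\<in>A. \<forall>b\<in>A. f (mul a b) = mul (f a) (f b))"

text \<open>A multiplier of T is a pair (L,R) of maps T \<rightarrow> T (we only look at their values on T),
  with L(st) = L(s)t, R(st) = sR(t), sL(t) = R(s)t.  We write w s = L s, s w = R s.\<close>
definition multiplier :: "('a \<Rightarrow> 'a \<Rightarrow> 'a) \<Rightarrow> 'a set \<Rightarrow> ('a \<Rightarrow> 'a) \<times> ('a \<Rightarrow> 'a) \<Rightarrow> bool" where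
  "multiplier mul T m \<longleftrightarrow>
     (\<forall>s\<in>T. fst m s \<in> T \<and> snd m s \<in> T) \<and>
     (\<forall>s\<in>T. \<forall>t\<in>T. fst m (mul s t) = mul (fst m s) t \<and>
                    snd m (mul s t) = mul s (snd m t) \<and>
                    mul s (fst m t) = mul (snd m s) t)"

text \<open>Units of the monoid M(T), with product (L,R)(L',R') = (L o L', R' o R)
  and identity (id,id) (equality of multipliers means equality on T).\<close>
definition unit_multiplier :: "('a \<Rightarrow> 'a \<Rightarrow> 'a) \<Rightarrow> 'a set \<Rightarrow> ('a \<Rightarrow> 'a) \<times> ('a \<Rightarrow> 'a) \<Rightarrow> bool" where
  "unit_multiplier mul T m \<longleftrightarrow> multiplier mul T m \<and>
     (\<exists>m'. multiplier mul T m' \<and>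
        (\<forall>s\<in>T. fst m (fst m' s) = s \<and> snd m' (snd m s) = s \<and>
                fst m' (fst m s) = s \<and> snd m (snd m' s) = s))"

definition mult_inv :: "'a set \<Rightarrow> ('a \<Rightarrow> 'a) \<times> ('a \<Rightarrow> 'a) \<Rightarrow> ('a \<Rightarrow> 'a) \<times> ('a \<Rightarrow> 'a)" where
  "mult_inv T m = (inv_into T (fst m), inv_into T (snd m))"

definition twisted_partial_action ::
  "('g, 'c) monoid_scheme \<Rightarrow> 'a set \<Rightarrow> ('a \<Rightarrow> 'a \<Rightarrow> 'a) \<Rightarrow>
   ('g \<Rightarrow> 'a set) \<Rightarrow> ('g \<Rightarrow> 'a \<Rightarrow> 'a) \<Rightarrow> ('g \<Rightarrow> 'g \<Rightarrow> ('a \<Rightarrow> 'a) \<times> ('a \<Rightarrow> 'a)) \<Rightarrow> bool" where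
  "twisted_partial_action G S mul D \<theta> w \<longleftrightarrow>
     \<comment> \<open>ideals and isomorphisms\<close>
     (\<forall>x\<in>carrier G. sg_ideal S mul (D x) \<and> sg_iso mul (\<theta> x) (D (inv\<^bsub>G\<^esub> x)) (D x)) \<and>
     \<comment> \<open>w x y is a unit multiplier of D_x D_{xy}\<close>
     (\<forall>x\<in>carrier G. \<forall>y\<in>carrier G.
        unit_multiplier mul (setmul mul (D x) (D (x \<otimes>\<^bsub>G\<^esub> y))) (w x y)) \<and>
     \<comment> \<open>(i)\<close>
     (\<forall>x\<in>carrier G. setmul mul (D x) (D x) = D x) \<and>
     (\<forall>x\<in>carrier G. \<forall>y\<in>carrier G. setmul mul (D x) (D y) = setmul mul (D y) (D x)) \<and>
     \<comment> \<open>(ii)\<close>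
     D \<one>\<^bsub>G\<^esub> = S \<and> (\<forall>s\<in>S. \<theta> \<one>\<^bsub>G\<^esub> s = s) \<and>
     \<comment> \<open>(iii)\<close>
     (\<forall>x\<in>carrier G. \<forall>y\<in>carrier G.
        \<theta> x ` setmul mul (D (inv\<^bsub>G\<^esub> x)) (D y) = setmul mul (D x) (D (x \<otimes>\<^bsub>G\<^esub> y))) \<and>
     \<comment> \<open>(iv): theta_x(theta_y(s)) = (w_{x,y} theta_{xy}(s)) w_{x,y}^{-1}\<close>
     (\<forall>x\<in>carrier G. \<forall>y\<in>carrier G.
        \<forall>s\<in>setmul mul (D (inv\<^bsub>G\<^esub> y)) (D (inv\<^bsub>G\<^esub> y \<otimes>\<^bsub>G\<^esub> inv\<^bsub>G\<^esub> x)).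
          \<theta> x (\<theta> y s) =
            snd (mult_inv (setmul mul (D x) (D (x \<otimes>\<^bsub>G\<^esub> y))) (w x y))
              (fst (w x y) (\<theta> (x \<otimes>\<^bsub>G\<^esub> y) s))) \<and>
     \<comment> \<open>(v): w_{1,x} = w_{x,1} = identity multiplier of D_x\<close>
     (\<forall>x\<in>carrier G. \<forall>s\<in>D x.
        fst (w \<one>\<^bsub>G\<^esub> x) s = s \<and> snd (w \<one>\<^bsub>G\<^esub> x) s = s \<and>
        fst (w x \<one>\<^bsub>G\<^esub>) s = s \<and> snd (w x \<one>\<^bsub>G\<^esub>) s = s) \<and>
     \<comment> \<open>(vi): theta_x(s w_{y,z}) w_{x,yz} = theta_x(s) w_{x,y} w_{xy,z}\<close>
     (\<forall>x\<in>carrier G. \<forall>y\<in>carrier G. \<forall>z\<in>carrier G.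
        \<forall>s\<in>setmul mul (setmul mul (D (inv\<^bsub>G\<^esub> x)) (D y)) (D (y \<otimes>\<^bsub>G\<^esub> z)).
          snd (w x (y \<otimes>\<^bsub>G\<^esub> z)) (\<theta> x (snd (w y z) s)) =
          snd (w (x \<otimes>\<^bsub>G\<^esub> y) z) (snd (w x y) (\<theta> x s)))"

text \<open>Elements s\<delta>_x are represented as pairs (s, x) with x in G and s in D_x.\<close>
definition crossed_product ::
  "('g, 'c) monoid_scheme \<Rightarrow> ('g \<Rightarrow> 'a set) \<Rightarrow> ('a \<times> 'g) set" where
  "crossed_product G D = {(s, x). x \<in> carrier G \<and> s \<in> D x}"

definition cp_mult ::
  "('g, 'c) monoid_scheme \<Rightarrow> ('a \<Rightarrow> 'a \<Rightarrow> 'a) \<Rightarrow> ('g \<Rightarrow> 'a set) \<Rightarrow> ('g \<Rightarrow> 'a \<Rightarrow> 'a) \<Rightarrow>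
   ('g \<Rightarrow> 'g \<Rightarrow> ('a \<Rightarrow> 'a) \<times> ('a \<Rightarrow> 'a)) \<Rightarrow> 'a \<times> 'g \<Rightarrow> 'a \<times> 'g \<Rightarrow> 'a \<times> 'g" where
  "cp_mult G mul D \<theta> w p q =
     (case p of (s, x) \<Rightarrow> case q of (t, y) \<Rightarrow>
       (snd (w x y) (\<theta> x (mul (inv_into (D (inv\<^bsub>G\<^esub> x)) (\<theta> x) s) t)), x \<otimes>\<^bsub>G\<^esub> y))"

end

theory Submission
  imports Defs
begin

text \<open>An idempotent \<open>s\<delta>\<^sub>x\<close> of the crossed product forces \<open>x\<^sup>2 = x\<close>, so the idempotents are the
  elements \<open>e\<delta>\<^sub>1\<close> with \<open>e\<close> idempotent in \<open>S\<close>, and they multiply as in \<open>S\<close>; hence they commute. A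
  semigroup whose idempotents commute and in which every element has some inverse is an inverse
  semigroup, and its inverses are unique. So it suffices to check that the displayed element is an
  inverse of \<open>s\<delta>\<^sub>x\<close>: this follows from axioms (iv) and (vi) for the pair \<open>x, x\<inverse>\<close>, using
  \<open>D\<^sub>1 = S\<close> and that \<open>w\<^sub>x\<^sub>,\<^sub>1\<close>, \<open>w\<^sub>1\<^sub>,\<^sub>x\<close> are trivial. Associativity of the crossed product is
  reduced, by (vi), to an identity in \<open>D\<^sub>x D\<^sub>x\<^sub>y\<close>, which is checked after applying the injective
  left action of \<open>w\<^sub>x\<^sub>,\<^sub>y\<close>.\<close>

section \<open>Inverse semigroups\<close>

lemma inverse_semigroup_onI:
  fixes mul :: "'a \<Rightarrow> 'a \<Rightarrow> 'a" (infixl "\<star>" 70)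
  assumes semigroup: "semigroup_on X (\<star>)"
    and regular: "\<And>a. a \<in> X \<Longrightarrow> \<exists>b\<in>X. a \<star> b \<star> a = a \<and> b \<star> a \<star> b = b"
    and idempotents_commute:
      "\<And>e f. e \<in> X \<Longrightarrow> f \<in> X \<Longrightarrow> e \<star> e = e \<Longrightarrow> f \<star> f = f \<Longrightarrow> e \<star> f = f \<star> e"
  shows "inverse_semigroup_on X (\<star>)"
proof -
  have cl: "\<And>a b. a \<in> X \<Longrightarrow> b \<in> X \<Longrightarrow> a \<star> b \<in> X"
    and assoc: "\<And>a b c. a \<in> X \<Longrightarrow> b \<in> X \<Longrightarrow> c \<in> X \<Longrightarrow> a \<star> b \<star> c = a \<star> (b \<star> c)"
    using semigroup unfolding semigroup_on_def by blast+
  have unique: "b = c"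
    if X: "a \<in> X" "b \<in> X" "c \<in> X"
      and b: "a \<star> b \<star> a = a" "b \<star> a \<star> b = b" and c: "a \<star> c \<star> a = a" "c \<star> a \<star> c = c"
    for a b c
  proof -
    \<comment> \<open>\<open>b = cab = c\<close>, since the idempotents \<open>ba, ca\<close> commute, and so do \<open>ab, ac\<close>.\<close>
    have ba: "(b \<star> a) \<star> (b \<star> a) = b \<star> a" using b X assoc cl by metis
    have ca: "(c \<star> a) \<star> (c \<star> a) = c \<star> a" using c X assoc cl by metis
    have ab: "(a \<star> b) \<star> (a \<star> b) = a \<star> b" using b X assoc cl by metis
    have ac: "(a \<star> c) \<star> (a \<star> c) = a \<star> c" using c X assoc cl by metis
    have "b = b \<star> (a \<star> c \<star> a) \<star> b" using b c by simp
    also have "\<dots> = ((b \<star> a) \<star> (c \<star> a)) \<star> b" using X cl assoc by metis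
    also have "(b \<star> a) \<star> (c \<star> a) = (c \<star> a) \<star> (b \<star> a)" using idempotents_commute ba ca X cl by blast
    also have "(c \<star> a) \<star> (b \<star> a) \<star> b = c \<star> (a \<star> b \<star> a) \<star> b" using X cl assoc by metis
    also have "\<dots> = c \<star> a \<star> b" using b by simp
    finally have b_eq: "b = c \<star> a \<star> b" .
    have "c = c \<star> (a \<star> b \<star> a) \<star> c" using b c by simp
    also have "\<dots> = c \<star> ((a \<star> b) \<star> (a \<star> c))" using X cl assoc by metis
    also have "(a \<star> b) \<star> (a \<star> c) = (a \<star> c) \<star> (a \<star> b)" using idempotents_commute ab ac X cl by blast
    also have "c \<star> ((a \<star> c) \<star> (a \<star> b)) = (c \<star> a \<star> c) \<star> a \<star> b" using X cl assoc by metis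
    also have "\<dots> = c \<star> a \<star> b" using c by simp
    finally show ?thesis using b_eq by simp
  qed
  show ?thesis
    unfolding inverse_semigroup_on_def using semigroup regular unique by metis
qed

lemma sg_inv_eqI:
  fixes mul :: "'a \<Rightarrow> 'a \<Rightarrow> 'a" (infixl "\<star>" 70)
  assumes "inverse_semigroup_on X (\<star>)" and "a \<in> X" "b \<in> X" "a \<star> b \<star> a = a" "b \<star> a \<star> b = b"
  shows "sg_inv X (\<star>) a = b"
proof -
  have "\<exists>!b. b \<in> X \<and> a \<star> b \<star> a = a \<and> b \<star> a \<star> b = b"
    using assms unfolding inverse_semigroup_on_def by blast
  then show ?thesis unfolding sg_inv_def by (rule the1_equality) (use assms in blast)
qed

locale inverse_semigroup =
  fixes S :: "'a set" and mul :: "'a \<Rightarrow> 'a \<Rightarrow> 'a" (infixl "\<cdot>" 70)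
  assumes inverse_semigroup: "inverse_semigroup_on S (\<cdot>)"
begin

abbreviation sinv :: "'a \<Rightarrow> 'a" where "sinv \<equiv> sg_inv S (\<cdot>)"

lemma closed [simp, intro]: "a \<in> S \<Longrightarrow> b \<in> S \<Longrightarrow> a \<cdot> b \<in> S"
  using inverse_semigroup unfolding inverse_semigroup_on_def semigroup_on_def by blast

lemma assoc: "a \<in> S \<Longrightarrow> b \<in> S \<Longrightarrow> c \<in> S \<Longrightarrow> a \<cdot> b \<cdot> c = a \<cdot> (b \<cdot> c)"
  using inverse_semigroup unfolding inverse_semigroup_on_def semigroup_on_def by blast

lemma sinv_props:
  assumes "a \<in> S"
  shows sinv_closed: "sinv a \<in> S" and mult_sinv_mult: "a \<cdot> sinv a \<cdot> a = a"
    and sinv_mult_sinv: "sinv a \<cdot> a \<cdot> sinv a = sinv a"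
proof -
  have "\<exists>!b. b \<in> S \<and> a \<cdot> b \<cdot> a = a \<and> b \<cdot> a \<cdot> b = b"
    using inverse_semigroup assms unfolding inverse_semigroup_on_def by blast
  then have "sinv a \<in> S \<and> a \<cdot> sinv a \<cdot> a = a \<and> sinv a \<cdot> a \<cdot> sinv a = sinv a"
    unfolding sg_inv_def by (rule theI')
  then show "sinv a \<in> S" "a \<cdot> sinv a \<cdot> a = a" "sinv a \<cdot> a \<cdot> sinv a = sinv a" by auto
qed

declare sinv_closed [simp, intro]

lemma sinv_eqI: "a \<in> S \<Longrightarrow> b \<in> S \<Longrightarrow> a \<cdot> b \<cdot> a = a \<Longrightarrow> b \<cdot> a \<cdot> b = b \<Longrightarrow> sinv a = b"
  using sg_inv_eqI[OF inverse_semigroup] .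

lemma mult_sinv_mult': "a \<in> S \<Longrightarrow> a \<cdot> (sinv a \<cdot> a) = a"
  using sinv_props assoc by metis

lemma sinv_mult_sinv': "a \<in> S \<Longrightarrow> sinv a \<cdot> (a \<cdot> sinv a) = sinv a"
  using sinv_props assoc by metis

lemma mult_sinv_mult_left: "a \<in> S \<Longrightarrow> z \<in> S \<Longrightarrow> a \<cdot> (sinv a \<cdot> (a \<cdot> z)) = a \<cdot> z"
  using mult_sinv_mult by (simp flip: assoc)

lemma idempotent_mult_idempotent:
  assumes S: "a \<in> S" "b \<in> S" and idem: "a \<cdot> a = a" "b \<cdot> b = b"
  shows "(a \<cdot> b) \<cdot> (a \<cdot> b) = a \<cdot> b"
proof -
  \<comment> \<open>Both \<open>x = (ab)\<inverse>\<close> and \<open>b x a\<close> are inverses of \<open>ab\<close>; so \<open>x\<close> is idempotent,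
    hence its own inverse, hence equal to \<open>ab\<close>.\<close>
  define x where "x = sinv (a \<cdot> b)"
  have xS: "x \<in> S" using S x_def by auto
  have abx: "a \<cdot> (b \<cdot> (x \<cdot> (a \<cdot> b))) = a \<cdot> b"
    using mult_sinv_mult[of "a \<cdot> b"] S x_def by (simp add: assoc)
  have xab: "x \<cdot> (a \<cdot> (b \<cdot> x)) = x"
    using sinv_mult_sinv[of "a \<cdot> b"] S x_def by (simp add: assoc)
  have xab': "x \<cdot> (a \<cdot> (b \<cdot> (x \<cdot> z))) = x \<cdot> z" if "z \<in> S" for z
  proof -
    have "x \<cdot> (a \<cdot> (b \<cdot> (x \<cdot> z))) = (x \<cdot> (a \<cdot> (b \<cdot> x))) \<cdot> z"
      using that S xS by (simp add: assoc)
    then show ?thesis using xab by simp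
  qed
  have aa: "a \<cdot> (a \<cdot> z) = a \<cdot> z" if "z \<in> S" for z
    using that S idem by (metis assoc)
  have bb: "b \<cdot> (b \<cdot> z) = b \<cdot> z" if "z \<in> S" for z
    using that S idem by (metis assoc)
  have "sinv (a \<cdot> b) = b \<cdot> x \<cdot> a"
  proof (rule sinv_eqI)
    show "a \<cdot> b \<cdot> (b \<cdot> x \<cdot> a) \<cdot> (a \<cdot> b) = a \<cdot> b"
      using S xS by (simp add: assoc aa bb abx)
    show "b \<cdot> x \<cdot> a \<cdot> (a \<cdot> b) \<cdot> (b \<cdot> x \<cdot> a) = b \<cdot> x \<cdot> a"
      using S xS by (simp add: assoc aa bb xab')
  qed (use S xS in auto)
  then have x_eq: "x = b \<cdot> (x \<cdot> a)" using x_def S xS by (simp add: assoc)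
  have "x \<cdot> x = b \<cdot> (x \<cdot> (a \<cdot> (b \<cdot> (x \<cdot> a))))"
    using x_eq S xS by (metis assoc closed)
  also have "\<dots> = b \<cdot> ((x \<cdot> (a \<cdot> (b \<cdot> x))) \<cdot> a)" using S xS by (simp add: assoc)
  finally have xx: "x \<cdot> x = x" using xab x_eq by simp
  have "sinv x = a \<cdot> b" using sinv_eqI[of x "a \<cdot> b"] S xS x_def sinv_props by auto
  moreover have "sinv x = x" using sinv_eqI[of x x] xS xx by auto
  ultimately show ?thesis using xx by simp
qed

lemma idempotents_commute:
  assumes S: "e \<in> S" "f \<in> S" and idem: "e \<cdot> e = e" "f \<cdot> f = f"
  shows "e \<cdot> f = f \<cdot> e"
proof -
  have ef: "(e \<cdot> f) \<cdot> (e \<cdot> f) = e \<cdot> f" and fe: "(f \<cdot> e) \<cdot> (f \<cdot> e) = f \<cdot> e"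
    using idempotent_mult_idempotent S idem by auto
  have "sinv (e \<cdot> f) = f \<cdot> e"
  proof (rule sinv_eqI)
    show "e \<cdot> f \<cdot> (f \<cdot> e) \<cdot> (e \<cdot> f) = e \<cdot> f" using S idem ef by (metis assoc closed)
    show "f \<cdot> e \<cdot> (e \<cdot> f) \<cdot> (f \<cdot> e) = f \<cdot> e" using S idem fe by (metis assoc closed)
  qed (use S in auto)
  moreover have "sinv (e \<cdot> f) = e \<cdot> f" using sinv_eqI[of "e \<cdot> f" "e \<cdot> f"] S ef by auto
  ultimately show ?thesis by simp
qed

lemma mult_sinv_idempotent: "a \<in> S \<Longrightarrow> (a \<cdot> sinv a) \<cdot> (a \<cdot> sinv a) = a \<cdot> sinv a"
  by (metis assoc closed sinv_closed mult_sinv_mult)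

lemma sinv_mult_idempotent: "a \<in> S \<Longrightarrow> (sinv a \<cdot> a) \<cdot> (sinv a \<cdot> a) = sinv a \<cdot> a"
  by (metis assoc closed sinv_closed sinv_mult_sinv)

lemma sinv_mult:
  assumes "a \<in> S" "b \<in> S"
  shows "sinv (a \<cdot> b) = sinv b \<cdot> sinv a"
proof (rule sinv_eqI)
  have comm: "(b \<cdot> sinv b) \<cdot> (sinv a \<cdot> a) = (sinv a \<cdot> a) \<cdot> (b \<cdot> sinv b)"
    using idempotents_commute mult_sinv_idempotent sinv_mult_idempotent assms by auto
  have "a \<cdot> b \<cdot> (sinv b \<cdot> sinv a) \<cdot> (a \<cdot> b) = a \<cdot> ((b \<cdot> sinv b) \<cdot> (sinv a \<cdot> a)) \<cdot> b"
    using assms by (simp add: assoc)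
  also have "\<dots> = (a \<cdot> sinv a \<cdot> a) \<cdot> (b \<cdot> sinv b \<cdot> b)" using assms comm by (simp add: assoc)
  finally show "a \<cdot> b \<cdot> (sinv b \<cdot> sinv a) \<cdot> (a \<cdot> b) = a \<cdot> b"
    using mult_sinv_mult assms by simp
  have "sinv b \<cdot> sinv a \<cdot> (a \<cdot> b) \<cdot> (sinv b \<cdot> sinv a)
      = sinv b \<cdot> ((sinv a \<cdot> a) \<cdot> (b \<cdot> sinv b)) \<cdot> sinv a"
    using assms by (simp add: assoc)
  also have "\<dots> = (sinv b \<cdot> b \<cdot> sinv b) \<cdot> (sinv a \<cdot> a \<cdot> sinv a)"
    using assms by (simp add: assoc flip: comm)
  finally show "sinv b \<cdot> sinv a \<cdot> (a \<cdot> b) \<cdot> (sinv b \<cdot> sinv a) = sinv b \<cdot> sinv a"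
    using sinv_mult_sinv assms by simp
qed (use assms in auto)

lemma sinv_mult_mult_absorb:
  assumes "u \<in> S" "t \<in> S"
  shows "sinv (u \<cdot> t) \<cdot> (u \<cdot> t) \<cdot> (sinv t \<cdot> t) = sinv (u \<cdot> t) \<cdot> (u \<cdot> t)"
proof -
  have "sinv (u \<cdot> t) \<cdot> (u \<cdot> t) = sinv t \<cdot> (sinv u \<cdot> (u \<cdot> t))"
    using sinv_mult assms by (simp add: assoc)
  then show ?thesis using assms by (simp add: assoc mult_sinv_mult')
qed

lemma eq_if_left_mult_eq:
  assumes I: "I \<subseteq> S" "\<And>a s. a \<in> I \<Longrightarrow> s \<in> S \<Longrightarrow> a \<cdot> s \<in> I"
    and ab: "a \<in> I" "b \<in> I" and eq: "\<And>q. q \<in> I \<Longrightarrow> q \<cdot> a = q \<cdot> b"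
  shows "a = b"
proof -
  have S: "a \<in> S" "b \<in> S" using I ab by auto
  let ?e = "a \<cdot> sinv a" and ?f = "b \<cdot> sinv b"
  have ea: "?e \<cdot> b = a" and fb: "?f \<cdot> a = b"
    using eq[of ?e] eq[of ?f] I ab S mult_sinv_mult by auto
  have comm: "?e \<cdot> ?f = ?f \<cdot> ?e"
    using idempotents_commute mult_sinv_idempotent S by simp
  have "a = ?e \<cdot> (?f \<cdot> a)" using ea fb by simp
  also have "\<dots> = (?f \<cdot> ?e) \<cdot> a" using S by (simp add: assoc flip: comm)
  also have "\<dots> = ?f \<cdot> a" using S mult_sinv_mult by (simp add: assoc)
  finally show ?thesis using fb by simp
qed

lemma ideal_subset: "sg_ideal S (\<cdot>) I \<Longrightarrow> I \<subseteq> S"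
  unfolding sg_ideal_def by blast

lemma ideal_mult_left: "sg_ideal S (\<cdot>) I \<Longrightarrow> s \<in> S \<Longrightarrow> a \<in> I \<Longrightarrow> s \<cdot> a \<in> I"
  unfolding sg_ideal_def by blast

lemma ideal_mult_right: "sg_ideal S (\<cdot>) I \<Longrightarrow> a \<in> I \<Longrightarrow> s \<in> S \<Longrightarrow> a \<cdot> s \<in> I"
  unfolding sg_ideal_def by blast

lemma ideal_sinv_closed:
  assumes "sg_ideal S (\<cdot>) I" "a \<in> I"
  shows "sinv a \<in> I"
proof -
  have "a \<in> S" using assms ideal_subset by blast
  moreover have "sinv a \<cdot> (a \<cdot> sinv a) \<in> I"
    using assms calculation ideal_mult_left ideal_mult_right by auto
  ultimately show ?thesis using sinv_mult_sinv' by simp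
qed

lemma setmul_ideals: 
  assumes "sg_ideal S (\<cdot>) I" "sg_ideal S (\<cdot>) J"
  shows "setmul (\<cdot>) I J = I \<inter> J"
proof
  show "setmul (\<cdot>) I J \<subseteq> I \<inter> J"
    unfolding setmul_def using assms ideal_subset ideal_mult_left ideal_mult_right by blast
  show "I \<inter> J \<subseteq> setmul (\<cdot>) I J"
  proof
    fix a assume a: "a \<in> I \<inter> J"
    then have "a \<in> S" using assms ideal_subset by blast
    then have "a \<cdot> sinv a \<in> I" "a = (a \<cdot> sinv a) \<cdot> a"
      using a assms ideal_mult_right mult_sinv_mult by auto
    then show "a \<in> setmul (\<cdot>) I J" unfolding setmul_def using a by blast
  qed
qed

lemma ideal_Int: "sg_ideal S (\<cdot>) I \<Longrightarrow> sg_ideal S (\<cdot>) J \<Longrightarrow> I \<inter> J \<noteq> {} \<Longrightarrow> sg_ideal S (\<cdot>) (I \<inter> J)"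
  unfolding sg_ideal_def by blast

end

section \<open>Unit multipliers of an ideal\<close>

locale unit_multiplier_on_ideal = inverse_semigroup +
  fixes T :: "'a set" and m :: "('a \<Rightarrow> 'a) \<times> ('a \<Rightarrow> 'a)"
  assumes T_subset: "T \<subseteq> S"
    and T_mult: "\<And>a s. a \<in> T \<Longrightarrow> s \<in> S \<Longrightarrow> s \<cdot> a \<in> T \<and> a \<cdot> s \<in> T"
    and unit: "unit_multiplier (\<cdot>) T m"
begin

lemma multiplier: "multiplier (\<cdot>) T m"
  using unit unfolding unit_multiplier_def by blast

lemma L_closed: "q \<in> T \<Longrightarrow> fst m q \<in> T"
  and R_closed: "q \<in> T \<Longrightarrow> snd m q \<in> T"
  and L_mult: "q \<in> T \<Longrightarrow> p \<in> T \<Longrightarrow> fst m (q \<cdot> p) = fst m q \<cdot> p"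
  and R_mult: "q \<in> T \<Longrightarrow> p \<in> T \<Longrightarrow> snd m (q \<cdot> p) = q \<cdot> snd m p"
  and mult_L_eq_R_mult: "q \<in> T \<Longrightarrow> p \<in> T \<Longrightarrow> q \<cdot> fst m p = snd m q \<cdot> p"
  using multiplier unfolding multiplier_def by blast+

lemma L_bij: "bij_betw (fst m) T T"
  and R_bij: "bij_betw (snd m) T T"
proof -
  from unit obtain m' :: "('a \<Rightarrow> 'a) \<times> ('a \<Rightarrow> 'a)"
    where m': "multiplier (\<cdot>) T m'"
      and inv: "\<forall>s\<in>T. fst m (fst m' s) = s \<and> snd m' (snd m s) = s \<and>
                  fst m' (fst m s) = s \<and> snd m (snd m' s) = s"
    unfolding unit_multiplier_def by blast
  have "fst m' \<in> T \<rightarrow> T" "snd m' \<in> T \<rightarrow> T" using m' unfolding multiplier_def by auto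
  moreover have "fst m \<in> T \<rightarrow> T" "snd m \<in> T \<rightarrow> T" using L_closed R_closed by auto
  ultimately show "bij_betw (fst m) T T" "bij_betw (snd m) T T"
    using inv by (auto intro: bij_betwI[where g = "fst m'"] bij_betwI[where g = "snd m'"])
qed

lemma L_inj: "q \<in> T \<Longrightarrow> p \<in> T \<Longrightarrow> fst m q = fst m p \<Longrightarrow> q = p"
  using inj_onD[OF bij_betw_imp_inj_on[OF L_bij]] by blast

lemma R_inj: "q \<in> T \<Longrightarrow> p \<in> T \<Longrightarrow> snd m q = snd m p \<Longrightarrow> q = p"
  using inj_onD[OF bij_betw_imp_inj_on[OF R_bij]] by blast

lemma L_inv_into: "q \<in> T \<Longrightarrow> inv_into T (fst m) q \<in> T \<and> fst m (inv_into T (fst m) q) = q"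
  using bij_betw_inv_into_right[OF L_bij] bij_betw_apply[OF bij_betw_inv_into[OF L_bij]] by blast

lemma R_inv_into: "q \<in> T \<Longrightarrow> inv_into T (snd m) q \<in> T \<and> snd m (inv_into T (snd m) q) = q"
  using bij_betw_inv_into_right[OF R_bij] bij_betw_apply[OF bij_betw_inv_into[OF R_bij]] by blast

text \<open>The multiplier axioms give this only for \<open>a \<in> T\<close>; insert the idempotent \<open>q q\<inverse> \<in> T\<close>.\<close>

lemma mult_R:
  assumes "a \<in> S" "q \<in> T"
  shows "a \<cdot> snd m q = snd m (a \<cdot> q)"
proof -
  have S: "q \<in> S" "snd m q \<in> S" using assms R_closed T_subset by auto
  have e: "q \<cdot> sinv q \<in> T" "a \<cdot> (q \<cdot> sinv q) \<in> T" using T_mult assms S by auto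
  have "a \<cdot> snd m q = a \<cdot> snd m ((q \<cdot> sinv q) \<cdot> q)" using S mult_sinv_mult by simp
  also have "snd m ((q \<cdot> sinv q) \<cdot> q) = (q \<cdot> sinv q) \<cdot> snd m q" using R_mult e assms by simp
  also have "a \<cdot> \<dots> = (a \<cdot> (q \<cdot> sinv q)) \<cdot> snd m q" using assms S by (simp add: assoc)
  also have "\<dots> = snd m ((a \<cdot> (q \<cdot> sinv q)) \<cdot> q)" using R_mult e assms by simp
  also have "(a \<cdot> (q \<cdot> sinv q)) \<cdot> q = a \<cdot> q" using assms S mult_sinv_mult by (simp add: assoc)
  finally show ?thesis .
qed

lemma L_R_commute:
  assumes "c \<in> T"
  shows "fst m (snd m c) = snd m (fst m c)"
proof (rule eq_if_left_mult_eq[of T])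
  show "T \<subseteq> S" "\<And>a s. a \<in> T \<Longrightarrow> s \<in> S \<Longrightarrow> a \<cdot> s \<in> T" using T_subset T_mult by auto
  show "fst m (snd m c) \<in> T" "snd m (fst m c) \<in> T" using assms L_closed R_closed by auto
  fix q assume q: "q \<in> T"
  have "q \<cdot> fst m (snd m c) = snd m q \<cdot> snd m c"
    using mult_L_eq_R_mult q R_closed assms by blast
  also have "\<dots> = snd m (snd m q \<cdot> c)" using R_mult R_closed q assms by simp
  also have "\<dots> = snd m (q \<cdot> fst m c)" using mult_L_eq_R_mult q assms by simp
  also have "\<dots> = q \<cdot> snd m (fst m c)" using R_mult q L_closed assms by simp
  finally show "q \<cdot> fst m (snd m c) = q \<cdot> snd m (fst m c)" .
qed

lemma sinv_L_mult_L:
  assumes "q \<in> T"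
  shows "sinv (fst m q) \<cdot> fst m q = sinv q \<cdot> q"
proof -
  have qS: "q \<in> S" using assms T_subset by blast
  have LT: "fst m q \<in> T" using L_closed assms by blast
  then have LS: "fst m q \<in> S" using T_subset by blast
  let ?e = "sinv q \<cdot> q" and ?f = "sinv (fst m q) \<cdot> fst m q"
  have eT: "?e \<in> T" and fT: "?f \<in> T" using T_mult assms LT qS LS by auto
  have "fst m q = fst m (q \<cdot> ?e)" using qS by (simp add: mult_sinv_mult')
  also have "\<dots> = fst m q \<cdot> ?e" using L_mult assms eT by blast
  finally have Le: "fst m q = fst m q \<cdot> ?e" .
  have "fst m (q \<cdot> ?f) = fst m q \<cdot> ?f" using L_mult assms fT by blast
  also have "\<dots> = fst m q" using LS by (simp add: mult_sinv_mult')
  finally have "fst m (q \<cdot> ?f) = fst m q" .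
  moreover have "q \<cdot> ?f \<in> T" using T_mult assms LS by auto
  ultimately have qf: "q \<cdot> ?f = q" using L_inj assms by blast
  have "?f \<cdot> ?e = ?f" using LS qS by (simp add: assoc flip: Le)
  moreover have "?e \<cdot> ?f = ?e" using LS qS by (simp add: assoc qf)
  moreover have "?e \<cdot> ?f = ?f \<cdot> ?e"
    using idempotents_commute sinv_mult_idempotent LS qS by simp
  ultimately show ?thesis by simp
qed

end

section \<open>Twisted partial actions\<close>

locale twisted_action = inverse_semigroup S mul for S and mul (infixl "\<cdot>" 70) +
  fixes G :: "('g, 'c) monoid_scheme" and D :: "'g \<Rightarrow> 'a set" and \<theta> :: "'g \<Rightarrow> 'a \<Rightarrow> 'a"
    and w :: "'g \<Rightarrow> 'g \<Rightarrow> ('a \<Rightarrow> 'a) \<times> ('a \<Rightarrow> 'a)"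
  assumes group: "group G" and twisted: "twisted_partial_action G S (\<cdot>) D \<theta> w"

sublocale twisted_action \<subseteq> G: group G by (rule group)

context twisted_action
begin

abbreviation ginv :: "'g \<Rightarrow> 'g" where "ginv x \<equiv> inv\<^bsub>G\<^esub> x"
abbreviation gmult :: "'g \<Rightarrow> 'g \<Rightarrow> 'g" (infixl "\<diamond>" 75) where "x \<diamond> y \<equiv> x \<otimes>\<^bsub>G\<^esub> y"
abbreviation \<theta>' :: "'g \<Rightarrow> 'a \<Rightarrow> 'a" where "\<theta>' x \<equiv> inv_into (D (ginv x)) (\<theta> x)"
abbreviation DD :: "'g \<Rightarrow> 'g \<Rightarrow> 'a set" where "DD x y \<equiv> D x \<inter> D (x \<diamond> y)"
  \<comment> \<open>the ideal \<open>D\<^sub>x D\<^sub>x\<^sub>y\<close> on which \<open>w\<^sub>x\<^sub>,\<^sub>y\<close> acts, cf. \<open>setmul_D\<close>\<close>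
abbreviation L :: "'g \<Rightarrow> 'g \<Rightarrow> 'a \<Rightarrow> 'a" where "L x y \<equiv> fst (w x y)"
abbreviation R :: "'g \<Rightarrow> 'g \<Rightarrow> 'a \<Rightarrow> 'a" where "R x y \<equiv> snd (w x y)"

lemma D_ideal: "x \<in> carrier G \<Longrightarrow> sg_ideal S (\<cdot>) (D x)"
  and theta_iso: "x \<in> carrier G \<Longrightarrow> sg_iso (\<cdot>) (\<theta> x) (D (ginv x)) (D x)"
  using twisted unfolding twisted_partial_action_def by blast+

lemma D_one: "D \<one>\<^bsub>G\<^esub> = S"
  and theta_one: "s \<in> S \<Longrightarrow> \<theta> \<one>\<^bsub>G\<^esub> s = s"
  using twisted unfolding twisted_partial_action_def by blast+

lemma w_one:
  "x \<in> carrier G \<Longrightarrow> s \<in> D x \<Longrightarrow> L \<one>\<^bsub>G\<^esub> x s = s \<and> R \<one>\<^bsub>G\<^esub> x s = s \<and> L x \<one>\<^bsub>G\<^esub> s = s \<and> R x \<one>\<^bsub>G\<^esub> s = s"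
  using twisted unfolding twisted_partial_action_def by blast

lemma D_subset: "x \<in> carrier G \<Longrightarrow> a \<in> D x \<Longrightarrow> a \<in> S"
  using D_ideal ideal_subset by blast

lemma D_mult_left: "x \<in> carrier G \<Longrightarrow> s \<in> S \<Longrightarrow> a \<in> D x \<Longrightarrow> s \<cdot> a \<in> D x"
  using D_ideal ideal_mult_left by blast

lemma D_mult_right: "x \<in> carrier G \<Longrightarrow> a \<in> D x \<Longrightarrow> s \<in> S \<Longrightarrow> a \<cdot> s \<in> D x"
  using D_ideal ideal_mult_right by blast

lemma D_sinv_closed: "x \<in> carrier G \<Longrightarrow> a \<in> D x \<Longrightarrow> sinv a \<in> D x"
  using D_ideal ideal_sinv_closed by blast

lemma setmul_D: "x \<in> carrier G \<Longrightarrow> y \<in> carrier G \<Longrightarrow> setmul (\<cdot>) (D x) (D y) = D x \<inter> D y"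
  using D_ideal setmul_ideals by blast

lemma w_unit:
  assumes "x \<in> carrier G" "y \<in> carrier G"
  shows "unit_multiplier_on_ideal S (\<cdot>) (DD x y) (w x y)"
proof unfold_locales
  show "DD x y \<subseteq> S" using D_subset assms by blast
  show "\<And>a s. a \<in> DD x y \<Longrightarrow> s \<in> S \<Longrightarrow> s \<cdot> a \<in> DD x y \<and> a \<cdot> s \<in> DD x y"
    using D_mult_left D_mult_right assms by simp
  show "unit_multiplier (\<cdot>) (DD x y) (w x y)"
    using twisted setmul_D assms unfolding twisted_partial_action_def by (metis G.m_closed)
qed

lemmas w_L_closed = unit_multiplier_on_ideal.L_closed[OF w_unit]
lemmas w_R_closed = unit_multiplier_on_ideal.R_closed[OF w_unit]
lemmas w_L_mult = unit_multiplier_on_ideal.L_mult[OF w_unit]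
lemmas w_R_mult = unit_multiplier_on_ideal.R_mult[OF w_unit]
lemmas w_mult_L_eq_R_mult = unit_multiplier_on_ideal.mult_L_eq_R_mult[OF w_unit]
lemmas w_L_inj = unit_multiplier_on_ideal.L_inj[OF w_unit]
lemmas w_R_inj = unit_multiplier_on_ideal.R_inj[OF w_unit]
lemmas w_L_inv_into = unit_multiplier_on_ideal.L_inv_into[OF w_unit]
lemmas w_R_inv_into = unit_multiplier_on_ideal.R_inv_into[OF w_unit]
lemmas w_mult_R = unit_multiplier_on_ideal.mult_R[OF w_unit]
lemmas w_L_R_commute = unit_multiplier_on_ideal.L_R_commute[OF w_unit]
lemmas w_sinv_L_mult_L = unit_multiplier_on_ideal.sinv_L_mult_L[OF w_unit]

lemma theta_bij: "x \<in> carrier G \<Longrightarrow> bij_betw (\<theta> x) (D (ginv x)) (D x)"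
  using theta_iso unfolding sg_iso_def by blast

lemma theta_mult:
  "x \<in> carrier G \<Longrightarrow> a \<in> D (ginv x) \<Longrightarrow> b \<in> D (ginv x) \<Longrightarrow> \<theta> x (a \<cdot> b) = \<theta> x a \<cdot> \<theta> x b"
  using theta_iso unfolding sg_iso_def by blast

lemma theta_closed: "x \<in> carrier G \<Longrightarrow> a \<in> D (ginv x) \<Longrightarrow> \<theta> x a \<in> D x"
  using theta_iso unfolding sg_iso_def bij_betw_def by blast

lemma theta_inj: "x \<in> carrier G \<Longrightarrow> a \<in> D (ginv x) \<Longrightarrow> b \<in> D (ginv x) \<Longrightarrow> \<theta> x a = \<theta> x b \<Longrightarrow> a = b"
  using theta_iso unfolding sg_iso_def bij_betw_def inj_on_def by blast

lemma theta'_closed: "x \<in> carrier G \<Longrightarrow> s \<in> D x \<Longrightarrow> \<theta>' x s \<in> D (ginv x)"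
  using theta_bij by (metis bij_betw_imp_surj_on inv_into_into)

lemma theta_theta': "x \<in> carrier G \<Longrightarrow> s \<in> D x \<Longrightarrow> \<theta> x (\<theta>' x s) = s"
  using theta_bij by (metis bij_betw_imp_surj_on f_inv_into_f)

lemma theta'_theta: "x \<in> carrier G \<Longrightarrow> a \<in> D (ginv x) \<Longrightarrow> \<theta>' x (\<theta> x a) = a"
  using theta_bij by (metis bij_betw_imp_inj_on inv_into_f_f)

lemma theta_image_Int:
  "x \<in> carrier G \<Longrightarrow> y \<in> carrier G \<Longrightarrow> \<theta> x ` (D (ginv x) \<inter> D y) = DD x y"
  using twisted setmul_D unfolding twisted_partial_action_def by (metis G.inv_closed G.m_closed)

lemma theta_closed_Int:
  "x \<in> carrier G \<Longrightarrow> y \<in> carrier G \<Longrightarrow> a \<in> D (ginv x) \<Longrightarrow> a \<in> D y \<Longrightarrow> \<theta> x a \<in> D (x \<diamond> y)"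
  using theta_image_Int by blast

lemma theta'_closed_Int:
  assumes "x \<in> carrier G" "y \<in> carrier G" "s \<in> D x" "s \<in> D (x \<diamond> y)"
  shows "\<theta>' x s \<in> D y"
proof -
  obtain b where "b \<in> D (ginv x) \<inter> D y" "s = \<theta> x b"
    using theta_image_Int assms by (metis IntI imageE)
  then show ?thesis using theta'_theta assms by simp
qed

lemma theta_sinv:
  assumes x: "x \<in> carrier G" and a: "a \<in> D (ginv x)"
  shows "\<theta> x (sinv a) = sinv (\<theta> x a)"
proof -
  have x': "ginv x \<in> carrier G" using x by simp
  have aS: "a \<in> S" using D_subset x' a by blast
  have ia: "sinv a \<in> D (ginv x)" using D_sinv_closed x' a by blast
  have "\<theta> x a \<cdot> \<theta> x (sinv a) \<cdot> \<theta> x a = \<theta> x (a \<cdot> sinv a \<cdot> a)"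
    using theta_mult x a ia D_mult_right x' aS by simp
  moreover have "\<theta> x (sinv a) \<cdot> \<theta> x a \<cdot> \<theta> x (sinv a) = \<theta> x (sinv a \<cdot> a \<cdot> sinv a)"
    using theta_mult x a ia D_mult_right x' aS by simp
  ultimately show ?thesis
    using sinv_eqI theta_closed D_subset x a ia mult_sinv_mult sinv_mult_sinv aS by metis
qed

lemma theta_mult_split:
  assumes x: "x \<in> carrier G" and a: "a \<in> D (ginv x)" and r: "r \<in> S"
  shows "sinv a \<cdot> (a \<cdot> r) \<in> D (ginv x)"
    and "\<theta> x (a \<cdot> r) = \<theta> x a \<cdot> \<theta> x (sinv a \<cdot> (a \<cdot> r))"
proof -
  have x': "ginv x \<in> carrier G" using x by simp
  have aS: "a \<in> S" using D_subset x' a by blast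
  show m: "sinv a \<cdot> (a \<cdot> r) \<in> D (ginv x)"
    using D_mult_left D_mult_right x' a aS r by simp
  have "a \<cdot> r = a \<cdot> (sinv a \<cdot> (a \<cdot> r))"
    using aS r by (simp add: mult_sinv_mult flip: assoc)
  then show "\<theta> x (a \<cdot> r) = \<theta> x a \<cdot> \<theta> x (sinv a \<cdot> (a \<cdot> r))"
    using theta_mult x a m by metis
qed

text \<open>Axiom (iv), with the conjugation by \<open>w\<^sub>x\<^sub>,\<^sub>y\<close> moved to the other side.\<close>

lemma theta_comp_twist:
  assumes xy: "x \<in> carrier G" "y \<in> carrier G" and p: "p \<in> D (ginv y)" "p \<in> D (ginv (x \<diamond> y))"
  shows "R x y (\<theta> x (\<theta> y p)) = L x y (\<theta> (x \<diamond> y) p)"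
proof -
  have "setmul (\<cdot>) (D (ginv y)) (D (ginv y \<diamond> ginv x)) = D (ginv y) \<inter> D (ginv (x \<diamond> y))"
    using setmul_D xy by (simp add: G.inv_mult_group)
  then have "\<theta> x (\<theta> y p) = snd (mult_inv (setmul (\<cdot>) (D x) (D (x \<diamond> y))) (w x y)) (L x y (\<theta> (x \<diamond> y) p))"
    using twisted xy p unfolding twisted_partial_action_def by simp
  also have "\<dots> = inv_into (DD x y) (R x y) (L x y (\<theta> (x \<diamond> y) p))"
    using setmul_D xy unfolding mult_inv_def by simp
  finally have e: "\<theta> x (\<theta> y p) = inv_into (DD x y) (R x y) (L x y (\<theta> (x \<diamond> y) p))" .
  have "\<theta> (x \<diamond> y) p \<in> D (x \<diamond> y)" using theta_closed xy p by simp
  moreover have "\<theta> (x \<diamond> y) p \<in> D x"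
    using theta_closed_Int[of "x \<diamond> y" "ginv y" p] xy p by (simp add: G.m_assoc)
  ultimately have "L x y (\<theta> (x \<diamond> y) p) \<in> DD x y" using w_L_closed xy by blast
  then show ?thesis using e w_R_inv_into xy by simp
qed

lemma theta_cocycle:
  assumes xyz: "x \<in> carrier G" "y \<in> carrier G" "z \<in> carrier G"
    and p: "p \<in> D (ginv x)" "p \<in> D y" "p \<in> D (y \<diamond> z)"
  shows "R x (y \<diamond> z) (\<theta> x (R y z p)) = R (x \<diamond> y) z (R x y (\<theta> x p))"
proof -
  have "sg_ideal S (\<cdot>) (D (ginv x) \<inter> D y)" using ideal_Int D_ideal xyz p by blast
  then have "setmul (\<cdot>) (setmul (\<cdot>) (D (ginv x)) (D y)) (D (y \<diamond> z)) = D (ginv x) \<inter> D y \<inter> D (y \<diamond> z)"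
    using setmul_D setmul_ideals D_ideal xyz by simp
  then show ?thesis using twisted xyz p unfolding twisted_partial_action_def by simp
qed

lemma D_Int_D_one [simp]: "x \<in> carrier G \<Longrightarrow> D x \<inter> D \<one>\<^bsub>G\<^esub> = D x"
  using D_one D_subset by auto

lemma theta_R_inverse:
  assumes x: "x \<in> carrier G" and q: "q \<in> D (ginv x)"
  shows "\<theta> x (R (ginv x) x q) = R x (ginv x) (\<theta> x q)"
proof -
  have "q \<in> D (ginv x \<diamond> x)" using q x D_one D_subset[of "ginv x"] by simp
  then have "R x \<one>\<^bsub>G\<^esub> (\<theta> x (R (ginv x) x q)) = R \<one>\<^bsub>G\<^esub> x (R x (ginv x) (\<theta> x q))"
    using theta_cocycle[of x "ginv x" x q] x q by simp
  moreover have "\<theta> x (R (ginv x) x q) \<in> D x"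
    using theta_closed w_R_closed[of "ginv x" x q] x q by simp
  moreover have "R x (ginv x) (\<theta> x q) \<in> D x"
    using theta_closed w_R_closed[of x "ginv x"] x q by simp
  ultimately show ?thesis using w_one x by simp
qed

lemma theta_L_inverse:
  assumes x: "x \<in> carrier G" and q: "q \<in> D (ginv x)"
  shows "\<theta> x (L (ginv x) x q) = L x (ginv x) (\<theta> x q)"
proof (rule eq_if_left_mult_eq[of "D x"])
  show "D x \<subseteq> S" "\<And>a s. a \<in> D x \<Longrightarrow> s \<in> S \<Longrightarrow> a \<cdot> s \<in> D x"
    using D_subset D_mult_right x by auto
  show "\<theta> x (L (ginv x) x q) \<in> D x"
    using theta_closed w_L_closed[of "ginv x" x q] x q by simp
  show "L x (ginv x) (\<theta> x q) \<in> D x"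
    using theta_closed w_L_closed[of x "ginv x"] x q by simp
  fix a assume a: "a \<in> D x"
  define a' where "a' = \<theta>' x a"
  have a': "a' \<in> D (ginv x)" "\<theta> x a' = a" using a x theta'_closed theta_theta' a'_def by auto
  have La: "L (ginv x) x q \<in> D (ginv x)" and Ra: "R (ginv x) x a' \<in> D (ginv x)"
    using w_L_closed[of "ginv x" x] w_R_closed[of "ginv x" x] x q a' by simp_all
  have "a \<cdot> \<theta> x (L (ginv x) x q) = \<theta> x (a' \<cdot> L (ginv x) x q)" using theta_mult x a' La by simp
  also have "a' \<cdot> L (ginv x) x q = R (ginv x) x a' \<cdot> q"
    using w_mult_L_eq_R_mult[of "ginv x" x] x q a' by simp
  also have "\<theta> x \<dots> = R x (ginv x) a \<cdot> \<theta> x q" using theta_mult theta_R_inverse x a' q Ra by simp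
  also have "\<dots> = a \<cdot> L x (ginv x) (\<theta> x q)"
    using w_mult_L_eq_R_mult[of x "ginv x"] theta_closed x q a by simp
  finally show "a \<cdot> \<theta> x (L (ginv x) x q) = a \<cdot> L x (ginv x) (\<theta> x q)" .
qed

section \<open>The crossed product\<close>

abbreviation CP :: "('a \<times> 'g) set" where "CP \<equiv> crossed_product G D"
abbreviation cpm :: "'a \<times> 'g \<Rightarrow> 'a \<times> 'g \<Rightarrow> 'a \<times> 'g" where "cpm \<equiv> cp_mult G (\<cdot>) D \<theta> w"

lemma cp_mult_eq: "cpm (s, x) (t, y) = (R x y (\<theta> x (\<theta>' x s \<cdot> t)), x \<diamond> y)"
  unfolding cp_mult_def by simp

lemma mem_crossed_product: "(s, x) \<in> CP \<longleftrightarrow> x \<in> carrier G \<and> s \<in> D x"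
  unfolding crossed_product_def by simp

lemma theta_mult_closed:
  assumes xy: "x \<in> carrier G" "y \<in> carrier G" and u: "u \<in> D (ginv x)" and t: "t \<in> D y"
  shows "u \<cdot> t \<in> D (ginv x)" "u \<cdot> t \<in> D y" "\<theta> x (u \<cdot> t) \<in> DD x y"
proof -
  have x': "ginv x \<in> carrier G" using xy by simp
  show p: "u \<cdot> t \<in> D (ginv x)" "u \<cdot> t \<in> D y"
    using D_mult_right[OF x' u D_subset[OF xy(2) t]] D_mult_left[OF xy(2) D_subset[OF x' u] t] .
  show "\<theta> x (u \<cdot> t) \<in> DD x y" using theta_closed theta_closed_Int xy p by blast
qed

lemma theta_theta_closed:
  assumes xy: "x \<in> carrier G" "y \<in> carrier G" and k: "k \<in> D (ginv y)" "k \<in> D (ginv (x \<diamond> y))"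
  shows "\<theta> y k \<in> D (ginv x)" "\<theta> x (\<theta> y k) \<in> DD x y"
proof -
  have "\<theta> y k \<in> D (y \<diamond> ginv (x \<diamond> y))" using theta_closed_Int xy k by simp
  then show yk: "\<theta> y k \<in> D (ginv x)" using xy by (simp add: G.inv_mult_group flip: G.m_assoc)
  show "\<theta> x (\<theta> y k) \<in> DD x y" using theta_closed theta_closed_Int xy k(1) yk by blast
qed

text \<open>Multiplying \<open>(s\<delta>\<^sub>x)(t\<delta>\<^sub>y) = q w\<^sub>x\<^sub>,\<^sub>y \<delta>\<^sub>x\<^sub>y\<close> by \<open>r\<delta>\<^sub>z\<close> on the right involves the
  ``twist source'' \<open>\<theta>\<^sub>x\<^sub>y\<inverse>(q w\<^sub>x\<^sub>,\<^sub>y)\<close>.\<close>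

lemma twist_source_closed:
  assumes "x \<in> carrier G" "y \<in> carrier G" "q \<in> DD x y"
  shows "\<theta>' (x \<diamond> y) q \<in> D (ginv y)" "\<theta>' (x \<diamond> y) q \<in> D (ginv (x \<diamond> y))"
proof -
  show "\<theta>' (x \<diamond> y) q \<in> D (ginv (x \<diamond> y))" using theta'_closed assms by simp
  have "q \<in> D (x \<diamond> y \<diamond> ginv y)" using assms by (simp add: G.m_assoc)
  then show "\<theta>' (x \<diamond> y) q \<in> D (ginv y)" using theta'_closed_Int[of "x \<diamond> y" "ginv y"] assms by simp
qed

lemma theta_theta_twist_source:
  assumes xy: "x \<in> carrier G" "y \<in> carrier G" and q: "q \<in> DD x y"
  shows "\<theta> x (\<theta> y (\<theta>' (x \<diamond> y) (R x y q))) = L x y q"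
proof -
  define c where "c = \<theta>' (x \<diamond> y) (R x y q)"
  have "R x y q \<in> DD x y" using w_R_closed xy q by blast
  then have c: "c \<in> D (ginv y)" "c \<in> D (ginv (x \<diamond> y))" "\<theta> (x \<diamond> y) c = R x y q"
    using twist_source_closed theta_theta' xy unfolding c_def by auto
  have xyc: "\<theta> x (\<theta> y c) \<in> DD x y" using theta_theta_closed xy c by blast
  have "R x y (L x y q) = L x y (R x y q)" using w_L_R_commute xy q by simp
  also have "\<dots> = R x y (\<theta> x (\<theta> y c))" using theta_comp_twist xy c by simp
  finally show ?thesis using w_R_inj xy xyc w_L_closed q unfolding c_def by metis
qed

lemma twist_source_closed_mult:
  assumes xy: "x \<in> carrier G" "y \<in> carrier G" and u: "u \<in> D (ginv x)" and t: "t \<in> D y"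
  defines "c \<equiv> \<theta>' (x \<diamond> y) (R x y (\<theta> x (u \<cdot> t)))"
  shows "c \<in> D (ginv y)" "c \<in> D (ginv (x \<diamond> y))"
  using twist_source_closed[OF xy w_R_closed[OF xy theta_mult_closed(3)[OF xy u t]]]
  unfolding c_def by simp_all

lemma theta_sinv_mult_twist_source:
  assumes xy: "x \<in> carrier G" "y \<in> carrier G" and u: "u \<in> D (ginv x)" and t: "t \<in> D y"
  defines "c \<equiv> \<theta>' (x \<diamond> y) (R x y (\<theta> x (u \<cdot> t)))"
  shows "\<theta> y (sinv c \<cdot> c) = sinv (u \<cdot> t) \<cdot> (u \<cdot> t)"
proof (rule theta_inj[OF xy(1)])
  let ?p = "u \<cdot> t"
  have x': "ginv x \<in> carrier G" and y': "ginv y \<in> carrier G" using xy by auto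
  note p = theta_mult_closed[OF xy u t]
  note c = twist_source_closed_mult[OF xy u t, folded c_def]
  have pS: "?p \<in> S" using D_subset x' p by blast
  note yc = theta_theta_closed(1)[OF xy c]
  have sinv_yc: "sinv (\<theta> y c) \<in> D (ginv x)" using D_sinv_closed x' yc by simp
  have theta_idem: "\<theta> y (sinv c \<cdot> c) = sinv (\<theta> y c) \<cdot> \<theta> y c"
    using theta_mult theta_sinv D_sinv_closed xy y' c by simp
  show "\<theta> y (sinv c \<cdot> c) \<in> D (ginv x)"
    using theta_idem D_mult_right x' sinv_yc yc D_subset by simp
  show "sinv ?p \<cdot> ?p \<in> D (ginv x)" using D_mult_right D_sinv_closed x' p pS by simp
  have "\<theta> x (\<theta> y (sinv c \<cdot> c)) = sinv (\<theta> x (\<theta> y c)) \<cdot> \<theta> x (\<theta> y c)"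
    using theta_idem theta_mult theta_sinv xy sinv_yc yc by simp
  also have "\<dots> = sinv (\<theta> x ?p) \<cdot> \<theta> x ?p"
    \<comment> \<open>\<open>\<theta>\<^sub>x(\<theta>\<^sub>y c) = w\<^sub>x\<^sub>,\<^sub>y \<theta>\<^sub>x(p)\<close>, and the left action of \<open>w\<^sub>x\<^sub>,\<^sub>y\<close> preserves \<open>q\<inverse>q\<close>\<close>
    using theta_theta_twist_source w_sinv_L_mult_L xy p unfolding c_def by simp
  also have "\<dots> = \<theta> x (sinv ?p \<cdot> ?p)" using theta_mult theta_sinv D_sinv_closed xy x' p by simp
  finally show "\<theta> x (\<theta> y (sinv c \<cdot> c)) = \<theta> x (sinv ?p \<cdot> ?p)" .
qed

lemma twist_source_idempotent_absorb:
  assumes xy: "x \<in> carrier G" "y \<in> carrier G" and u: "u \<in> D (ginv x)" and t: "t \<in> D y"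
  defines "c \<equiv> \<theta>' (x \<diamond> y) (R x y (\<theta> x (u \<cdot> t)))"
  shows "sinv c \<cdot> c \<cdot> (sinv (\<theta>' y t) \<cdot> \<theta>' y t) = sinv c \<cdot> c"
proof -
  define v where "v = \<theta>' y t"
  have y': "ginv y \<in> carrier G" using xy by simp
  note c = twist_source_closed_mult[OF xy u t, folded c_def]
  have v: "v \<in> D (ginv y)" "\<theta> y v = t" using theta'_closed theta_theta' xy t unfolding v_def by auto
  have cS: "c \<in> S" and vS: "v \<in> S" and uS: "u \<in> S" and tS: "t \<in> S"
    using D_subset y' c v u t xy by auto
  have idem: "sinv c \<cdot> c \<in> D (ginv y)" and idem_v: "sinv v \<cdot> v \<in> D (ginv y)"
    using D_mult_right D_sinv_closed y' c cS v vS by auto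
  have "sinv c \<cdot> c \<cdot> (sinv v \<cdot> v) = sinv c \<cdot> c"
  proof (rule theta_inj[OF xy(2)])
    show "sinv c \<cdot> c \<cdot> (sinv v \<cdot> v) \<in> D (ginv y)" using D_mult_right idem y' vS by simp
    show "sinv c \<cdot> c \<in> D (ginv y)" by (rule idem)
    have "\<theta> y (sinv c \<cdot> c \<cdot> (sinv v \<cdot> v)) = sinv (u \<cdot> t) \<cdot> (u \<cdot> t) \<cdot> (sinv t \<cdot> t)"
      using theta_mult theta_sinv D_sinv_closed theta_sinv_mult_twist_source[OF xy u t] xy idem idem_v v
      unfolding c_def by simp
    also have "\<dots> = \<theta> y (sinv c \<cdot> c)"
      using sinv_mult_mult_absorb theta_sinv_mult_twist_source[OF xy u t] uS tS unfolding c_def by simp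
    finally show "\<theta> y (sinv c \<cdot> c \<cdot> (sinv v \<cdot> v)) = \<theta> y (sinv c \<cdot> c)" .
  qed
  then show ?thesis unfolding v_def .
qed

lemma L_theta_mult_split:
  assumes xy: "x \<in> carrier G" "y \<in> carrier G"
    and c: "c \<in> D (ginv y)" "c \<in> D (ginv (x \<diamond> y))" and r: "r \<in> S"
  shows "L x y (\<theta> (x \<diamond> y) (c \<cdot> r)) = \<theta> x (\<theta> y c) \<cdot> R x y (\<theta> x (\<theta> y (sinv c \<cdot> (c \<cdot> r))))"
proof -
  let ?k = "sinv c \<cdot> (c \<cdot> r)"
  have y': "ginv y \<in> carrier G" and xy': "x \<diamond> y \<in> carrier G" using xy by auto
  have cr: "c \<cdot> r \<in> D (ginv y)" "c \<cdot> r \<in> D (ginv (x \<diamond> y))"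
    using D_mult_right y' xy' c r by auto
  have k: "?k \<in> D (ginv y)" "?k \<in> D (ginv (x \<diamond> y))" "\<theta> y (c \<cdot> r) = \<theta> y c \<cdot> \<theta> y ?k"
    using theta_mult_split[OF xy(2) c(1) r] theta_mult_split[OF xy' c(2) r] by auto
  note c_closed = theta_theta_closed[OF xy c] and k_closed = theta_theta_closed[OF xy k(1,2)]
  have "L x y (\<theta> (x \<diamond> y) (c \<cdot> r)) = R x y (\<theta> x (\<theta> y (c \<cdot> r)))"
    using theta_comp_twist xy cr by simp
  also have "\<theta> x (\<theta> y (c \<cdot> r)) = \<theta> x (\<theta> y c) \<cdot> \<theta> x (\<theta> y ?k)"
    using k(3) theta_mult xy c_closed(1) k_closed(1) by simp
  also have "R x y \<dots> = \<theta> x (\<theta> y c) \<cdot> R x y (\<theta> x (\<theta> y ?k))"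
    using w_R_mult xy c_closed(2) k_closed(2) by blast
  finally show ?thesis .
qed

lemma theta_mult_twist_source:
  assumes xy: "x \<in> carrier G" "y \<in> carrier G" and u: "u \<in> D (ginv x)" and t: "t \<in> D y"
    and r: "r \<in> S"
  defines "c \<equiv> \<theta>' (x \<diamond> y) (R x y (\<theta> x (u \<cdot> t)))"
  shows "\<theta> x (u \<cdot> \<theta> y (\<theta>' y t \<cdot> r)) = \<theta> x (u \<cdot> t) \<cdot> \<theta> x (\<theta> y (sinv c \<cdot> (c \<cdot> r)))"
proof -
  let ?p = "u \<cdot> t" and ?k = "sinv c \<cdot> (c \<cdot> r)" and ?v = "\<theta>' y t"
  have x': "ginv x \<in> carrier G" and y': "ginv y \<in> carrier G" and xy': "x \<diamond> y \<in> carrier G"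
    using xy by auto
  note p = theta_mult_closed[OF xy u t]
  note c = twist_source_closed_mult[OF xy u t, folded c_def]
  have uS: "u \<in> S" and tS: "t \<in> S" and cS: "c \<in> S" using D_subset x' y' xy u t c by auto
  then have pS: "?p \<in> S" by simp
  have k: "?k \<in> D (ginv y)" "?k \<in> D (ginv (x \<diamond> y))"
    using theta_mult_split(1)[OF xy(2) c(1) r] theta_mult_split(1)[OF xy' c(2) r] .
  have v: "?v \<in> D (ginv y)" "\<theta> y ?v = t" using theta'_closed theta_theta' xy t by auto
  have k': "sinv ?v \<cdot> (?v \<cdot> r) \<in> D (ginv y)" "\<theta> y (?v \<cdot> r) = t \<cdot> \<theta> y (sinv ?v \<cdot> (?v \<cdot> r))"
    using theta_mult_split[OF xy(2) v(1) r] v by simp_all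
  have yk'S: "\<theta> y (sinv ?v \<cdot> (?v \<cdot> r)) \<in> S" using theta_closed D_subset xy k' by blast
  have absorb: "sinv ?p \<cdot> ?p \<cdot> \<theta> y (sinv ?v \<cdot> (?v \<cdot> r)) = \<theta> y ?k"
  proof -
    have "sinv c \<cdot> c \<in> D (ginv y)" using D_mult_right D_sinv_closed y' c cS by simp
    then have "sinv ?p \<cdot> ?p \<cdot> \<theta> y (sinv ?v \<cdot> (?v \<cdot> r)) = \<theta> y (sinv c \<cdot> c \<cdot> (sinv ?v \<cdot> (?v \<cdot> r)))"
      using theta_sinv_mult_twist_source[OF xy u t] theta_mult xy k' unfolding c_def by simp
    also have "sinv c \<cdot> c \<cdot> (sinv ?v \<cdot> (?v \<cdot> r)) = sinv c \<cdot> c \<cdot> (sinv ?v \<cdot> ?v) \<cdot> r"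
      using cS D_subset y' v r by (simp add: assoc)
    also have "\<dots> = ?k"
      using twist_source_idempotent_absorb[OF xy u t] cS r unfolding c_def by (simp add: assoc)
    finally show ?thesis .
  qed
  have "u \<cdot> \<theta> y (?v \<cdot> r) = ?p \<cdot> \<theta> y (sinv ?v \<cdot> (?v \<cdot> r))"
    using k' uS tS yk'S by (simp add: assoc)
  also have "\<dots> = ?p \<cdot> (sinv ?p \<cdot> ?p \<cdot> \<theta> y (sinv ?v \<cdot> (?v \<cdot> r)))"
    using pS yk'S by (simp add: assoc mult_sinv_mult_left)
  also have "\<dots> = ?p \<cdot> \<theta> y ?k" by (simp only: absorb)
  finally show ?thesis using theta_mult xy p theta_theta_closed(1)[OF xy k] by simp
qed

text \<open>Both sides lie in \<open>D\<^sub>x D\<^sub>x\<^sub>y\<close>, on which the left action of \<open>w\<^sub>x\<^sub>,\<^sub>y\<close> is injective; after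
  applying it, both sides become \<open>w\<^sub>x\<^sub>,\<^sub>y m \<cdot> \<psi> w\<^sub>x\<^sub>,\<^sub>y\<close>.\<close>

lemma cp_assoc_core:
  assumes xyz: "x \<in> carrier G" "y \<in> carrier G" "z \<in> carrier G"
    and u: "u \<in> D (ginv x)" and t: "t \<in> D y" and r: "r \<in> D z"
  shows "\<theta> (x \<diamond> y) (\<theta>' (x \<diamond> y) (R x y (\<theta> x (u \<cdot> t))) \<cdot> r)
       = R x y (\<theta> x (u \<cdot> \<theta> y (\<theta>' y t \<cdot> r)))"
proof -
  define m where "m = \<theta> x (u \<cdot> t)"
  define c where "c = \<theta>' (x \<diamond> y) (R x y m)"
  define \<psi> where "\<psi> = \<theta> x (\<theta> y (sinv c \<cdot> (c \<cdot> r)))"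
  have xy: "x \<diamond> y \<in> carrier G" using xyz by simp
  have rS: "r \<in> S" using D_subset[OF xyz(3) r] .
  have m: "m \<in> DD x y" using theta_mult_closed(3)[OF xyz(1,2) u t] unfolding m_def .
  have c: "c \<in> D (ginv y)" "c \<in> D (ginv (x \<diamond> y))"
    using twist_source_closed_mult[OF xyz(1,2) u t] unfolding c_def m_def .
  have \<psi>: "\<psi> \<in> DD x y"
    using theta_theta_closed(2)[OF xyz(1,2) theta_mult_split(1)[OF xyz(2) c(1) rS]
        theta_mult_split(1)[OF xy c(2) rS]] unfolding \<psi>_def .
  have "\<theta> (x \<diamond> y) (c \<cdot> r) = R x y (m \<cdot> \<psi>)"
  proof (rule w_L_inj[OF xyz(1,2)])
    show "\<theta> (x \<diamond> y) (c \<cdot> r) \<in> DD x y"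
      using theta_closed theta_closed_Int[of "x \<diamond> y" "ginv y"] D_mult_right xyz xy c rS
      by (simp add: G.m_assoc)
    have "\<psi> \<in> S" using D_subset[OF xyz(1)] \<psi> by blast
    then have "m \<cdot> \<psi> \<in> DD x y" using D_mult_right[OF xyz(1)] D_mult_right[OF xy] m by blast
    then show "R x y (m \<cdot> \<psi>) \<in> DD x y" using w_R_closed[OF xyz(1,2)] by blast
    have "L x y (\<theta> (x \<diamond> y) (c \<cdot> r)) = L x y m \<cdot> R x y \<psi>"
      using L_theta_mult_split[OF xyz(1,2) c rS] theta_theta_twist_source xyz m
      unfolding c_def \<psi>_def by simp
    also have "\<dots> = L x y (R x y (m \<cdot> \<psi>))"
      using w_R_mult w_L_mult w_R_closed xyz m \<psi> by simp
    finally show "L x y (\<theta> (x \<diamond> y) (c \<cdot> r)) = L x y (R x y (m \<cdot> \<psi>))" .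
  qed
  also have "m \<cdot> \<psi> = \<theta> x (u \<cdot> \<theta> y (\<theta>' y t \<cdot> r))"
    using theta_mult_twist_source[OF xyz(1,2) u t rS] unfolding m_def c_def \<psi>_def by simp
  finally show ?thesis unfolding c_def m_def .
qed

lemma cp_mult_closed:
  assumes "(s, x) \<in> CP" "(t, y) \<in> CP"
  shows "cpm (s, x) (t, y) \<in> CP"
  using assms theta_mult_closed(3) theta'_closed w_R_closed
  by (auto simp: mem_crossed_product cp_mult_eq)

lemma cp_mult_assoc:
  assumes "(s, x) \<in> CP" "(t, y) \<in> CP" "(r, z) \<in> CP"
  shows "cpm (cpm (s, x) (t, y)) (r, z) = cpm (s, x) (cpm (t, y) (r, z))"
proof -
  have xyz: "x \<in> carrier G" "y \<in> carrier G" "z \<in> carrier G" and s: "s \<in> D x"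
    and t: "t \<in> D y" and r: "r \<in> D z"
    using assms by (simp_all add: mem_crossed_product)
  define u where "u = \<theta>' x s"
  define n where "n = \<theta> y (\<theta>' y t \<cdot> r)"
  have u: "u \<in> D (ginv x)" using theta'_closed xyz s unfolding u_def by blast
  have n: "n \<in> DD y z" using theta_mult_closed(3)[OF xyz(2,3) theta'_closed[OF xyz(2) t] r]
    unfolding n_def .
  have uS: "u \<in> S" and nS: "n \<in> S" using D_subset u n xyz by auto
  have "u \<cdot> n \<in> D (ginv x)" "u \<cdot> n \<in> D y" "u \<cdot> n \<in> D (y \<diamond> z)"
    using D_mult_right[OF _ u nS] D_mult_left[OF _ uS] n xyz by auto
  then have "R x (y \<diamond> z) (\<theta> x (R y z (u \<cdot> n))) = R (x \<diamond> y) z (R x y (\<theta> x (u \<cdot> n)))"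
    using theta_cocycle xyz by blast
  moreover have "u \<cdot> R y z n = R y z (u \<cdot> n)" using w_mult_R xyz uS n by blast
  moreover have "\<theta> (x \<diamond> y) (\<theta>' (x \<diamond> y) (R x y (\<theta> x (u \<cdot> t))) \<cdot> r) = R x y (\<theta> x (u \<cdot> n))"
    using cp_assoc_core xyz u t r unfolding n_def by blast
  ultimately show ?thesis using xyz unfolding cp_mult_eq u_def n_def by (simp add: G.m_assoc)
qed

lemma cp_mult_one_left:
  assumes "g \<in> S" "z \<in> carrier G" "t \<in> D z"
  shows "cpm (g, \<one>\<^bsub>G\<^esub>) (t, z) = (g \<cdot> t, z)"
proof -
  have "\<theta>' \<one>\<^bsub>G\<^esub> g = g" using theta'_theta[of "\<one>\<^bsub>G\<^esub>" g] theta_one D_one assms by simp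
  moreover have "g \<cdot> t \<in> D z" using D_mult_left assms by blast
  ultimately show ?thesis using theta_one w_one assms D_subset unfolding cp_mult_eq by simp
qed

lemma cp_idempotent:
  assumes "p \<in> CP" "cpm p p = p"
  obtains e where "p = (e, \<one>\<^bsub>G\<^esub>)" "e \<in> S" "e \<cdot> e = e"
proof -
  obtain s x where p: "p = (s, x)" "x \<in> carrier G" "s \<in> D x"
    using assms(1) by (metis mem_crossed_product surj_pair)
  have "x \<diamond> x = x" using assms(2) unfolding p(1) cp_mult_eq by simp
  then have x: "x = \<one>\<^bsub>G\<^esub>" using p by (metis G.l_cancel_one')
  have "s \<in> S" using p D_subset by blast
  moreover from this have "cpm p p = (s \<cdot> s, \<one>\<^bsub>G\<^esub>)" using cp_mult_one_left p x by simp
  ultimately show ?thesis using that assms(2) p x by auto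
qed

lemma cp_idempotents_commute:
  assumes "e \<in> CP" "f \<in> CP" "cpm e e = e" "cpm f f = f"
  shows "cpm e f = cpm f e"
proof -
  obtain e' where e: "e = (e', \<one>\<^bsub>G\<^esub>)" "e' \<in> S" "e' \<cdot> e' = e'" using cp_idempotent assms by metis
  obtain f' where f: "f = (f', \<one>\<^bsub>G\<^esub>)" "f' \<in> S" "f' \<cdot> f' = f'" using cp_idempotent assms by metis
  show ?thesis
    using cp_mult_one_left[of e' "\<one>\<^bsub>G\<^esub>" f'] cp_mult_one_left[of f' "\<one>\<^bsub>G\<^esub>" e'] e f D_one
      idempotents_commute[of e' f'] by simp
qed

lemma cp_inverse_right:
  assumes x: "x \<in> carrier G" and s: "s \<in> D x"
    and b: "b \<in> D (ginv x)" "L (ginv x) x b = \<theta> (ginv x) (sinv s)"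
  shows "cpm (cpm (s, x) (b, ginv x)) (s, x) = (s, x)"
proof -
  let ?y = "ginv x"
  have y: "?y \<in> carrier G" using x by simp
  have sS: "s \<in> S" and s': "sinv s \<in> D x" using D_subset D_sinv_closed x s by auto
  define c where "c = \<theta> x b"
  have c: "c \<in> DD x ?y" using theta_closed x b unfolding c_def by simp
  have "L x ?y (R x ?y c) = R x ?y (L x ?y c)" using w_L_R_commute[of x ?y c] x c by simp
  also have "L x ?y c = \<theta> x (\<theta> ?y (sinv s))"
    using theta_L_inverse[OF x b(1)] b(2) unfolding c_def by simp
  also have "R x ?y \<dots> = L x ?y (sinv s)"
    using theta_comp_twist[of x ?y "sinv s"] theta_one D_one x s' sS by simp
  finally have Rc: "R x ?y c = sinv s"
    using w_L_inj[of x ?y] w_R_closed[of x ?y c] x c s' by simp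
  have "\<theta> x (\<theta>' x s \<cdot> b) = s \<cdot> c"
    using theta_mult theta'_closed theta_theta' x s b unfolding c_def by simp
  then have "cpm (s, x) (b, ?y) = (s \<cdot> sinv s, \<one>\<^bsub>G\<^esub>)"
    using w_R_mult[of x ?y s c] x s c Rc unfolding cp_mult_eq by simp
  then show ?thesis using cp_mult_one_left x s sS mult_sinv_mult by simp
qed

lemma cp_inverse_left:
  assumes x: "x \<in> carrier G" and s: "s \<in> D x"
    and b: "b \<in> D (ginv x)" "L (ginv x) x b = \<theta> (ginv x) (sinv s)"
  shows "cpm (cpm (b, ginv x) (s, x)) (b, ginv x) = (b, ginv x)"
proof -
  let ?y = "ginv x"
  have y: "?y \<in> carrier G" using x by simp
  have sS: "s \<in> S" and bS: "b \<in> S" and s': "sinv s \<in> D x"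
    using D_subset D_sinv_closed x y s b by auto
  have ys: "\<theta> ?y s \<in> D ?y" using theta_closed y x s by simp
  have bys: "b \<cdot> \<theta> ?y s \<in> D ?y" using D_mult_right y b ys D_subset by blast
  define h where "h = R ?y x (b \<cdot> \<theta> ?y s)"
  have h: "h \<in> D ?y" using w_R_closed[of ?y x] x bys unfolding h_def by simp
  have "\<theta> ?y (\<theta>' ?y b \<cdot> s) = b \<cdot> \<theta> ?y s"
    using theta_mult[of ?y "\<theta>' ?y b" s] theta'_closed[OF y b(1)] theta_theta'[OF y b(1)] x s by simp
  then have prod: "cpm (b, ?y) (s, x) = (h, \<one>\<^bsub>G\<^esub>)" unfolding cp_mult_eq h_def using x by simp
  define e where "e = \<theta> ?y (s \<cdot> sinv s)"
  have ss': "s \<cdot> sinv s \<in> D x" using D_mult_right x s sS by simp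
  have e: "e \<in> D ?y" using theta_closed x y ss' unfolding e_def by simp
  have "h \<cdot> b = b \<cdot> \<theta> ?y s \<cdot> L ?y x b"
    using w_mult_L_eq_R_mult[of ?y x "b \<cdot> \<theta> ?y s" b] x bys b(1) unfolding h_def by simp
  also have "\<dots> = b \<cdot> (\<theta> ?y s \<cdot> \<theta> ?y (sinv s))"
    using b(2) bS D_subset[OF y ys] D_subset[OF y theta_closed[OF y]] x s' by (simp add: assoc)
  also have "\<dots> = b \<cdot> e" using theta_mult x y s s' unfolding e_def by simp
  also have "\<dots> = b"
  proof (rule w_L_inj[OF y x])
    show "b \<cdot> e \<in> DD ?y x" "b \<in> DD ?y x"
      using D_mult_right[OF y b(1) D_subset[OF y e]] b x by auto
    have "L ?y x (b \<cdot> e) = \<theta> ?y (sinv s) \<cdot> e" using w_L_mult[of ?y x b e] x b e by simp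
    also have "\<dots> = \<theta> ?y (sinv s \<cdot> (s \<cdot> sinv s))" using theta_mult x y s' ss' unfolding e_def by simp
    finally show "L ?y x (b \<cdot> e) = L ?y x b" using sinv_mult_sinv' sS b by simp
  qed
  finally show ?thesis using prod cp_mult_one_left h b y D_subset by simp
qed

lemma cp_semigroup: "semigroup_on CP cpm"
  unfolding semigroup_on_def by (simp add: Ball_def split_paired_All cp_mult_closed cp_mult_assoc)

lemma cp_inverse:
  assumes "(s, x) \<in> CP"
  defines "b \<equiv> inv_into (DD (ginv x) x) (L (ginv x) x) (\<theta> (ginv x) (sinv s))"
  shows "(b, ginv x) \<in> CP" and "cpm (cpm (s, x) (b, ginv x)) (s, x) = (s, x)"
    and "cpm (cpm (b, ginv x) (s, x)) (b, ginv x) = (b, ginv x)"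
proof -
  have x: "x \<in> carrier G" and s: "s \<in> D x" using assms by (simp_all add: mem_crossed_product)
  have "\<theta> (ginv x) (sinv s) \<in> DD (ginv x) x" using theta_closed D_sinv_closed x s by simp
  then have b: "b \<in> D (ginv x)" "L (ginv x) x b = \<theta> (ginv x) (sinv s)"
    using w_L_inv_into[of "ginv x" x] x unfolding b_def by auto
  then show "(b, ginv x) \<in> CP" using x by (simp add: mem_crossed_product)
  show "cpm (cpm (s, x) (b, ginv x)) (s, x) = (s, x)" using cp_inverse_right x s b .
  show "cpm (cpm (b, ginv x) (s, x)) (b, ginv x) = (b, ginv x)" using cp_inverse_left x s b .
qed

end

theorem lemma5p12:
  fixes G :: "('g, 'c) monoid_scheme"
    and S :: "'a set" and mul :: "'a \<Rightarrow> 'a \<Rightarrow> 'a"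
    and D :: "'g \<Rightarrow> 'a set" and \<theta> :: "'g \<Rightarrow> 'a \<Rightarrow> 'a"
    and w :: "'g \<Rightarrow> 'g \<Rightarrow> ('a \<Rightarrow> 'a) \<times> ('a \<Rightarrow> 'a)"
  assumes "group G"
    and "inverse_semigroup_on S mul"
    and "twisted_partial_action G S mul D \<theta> w"
  shows "inverse_semigroup_on (crossed_product G D) (cp_mult G mul D \<theta> w) \<and>
    (\<forall>s x. (s, x) \<in> crossed_product G D \<longrightarrow>
       sg_inv (crossed_product G D) (cp_mult G mul D \<theta> w) (s, x) =
         (fst (mult_inv (setmul mul (D (inv\<^bsub>G\<^esub> x)) (D (inv\<^bsub>G\<^esub> x \<otimes>\<^bsub>G\<^esub> x)))
                        (w (inv\<^bsub>G\<^esub> x) x))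
              (\<theta> (inv\<^bsub>G\<^esub> x) (sg_inv S mul s)),
          inv\<^bsub>G\<^esub> x))"
proof -
  interpret twisted_action S mul G D \<theta> w
    using assms by (simp add: twisted_action_def twisted_action_axioms_def inverse_semigroup_def)
  have isg: "inverse_semigroup_on CP cpm"
  proof (rule inverse_semigroup_onI[OF cp_semigroup _ cp_idempotents_commute])
    show "\<exists>q\<in>CP. cpm (cpm p q) p = p \<and> cpm (cpm q p) q = q" if "p \<in> CP" for p
      using cp_inverse that by (metis surj_pair)
  qed
  have "sg_inv CP cpm (s, x) =
      (fst (mult_inv (setmul mul (D (ginv x)) (D (ginv x \<diamond> x))) (w (ginv x) x)) (\<theta> (ginv x) (sinv s)),
       ginv x)" if "(s, x) \<in> CP" for s x
    using sg_inv_eqI[OF isg] cp_inverse[OF that] setmul_D that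
    by (simp add: mult_inv_def mem_crossed_product)
  with isg show ?thesis by blast
qed

end
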